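(* Let $a,b,c$ be positive numbers with $a<b<c$ and $b-a<c-\lfloor c/b\rfloor b<a$. Then for every $t\in\mathcal S_{a,b,c}$ there is exactly one vector $\mathbf x\in\mathcal B_b^0$ with $\mathbf M_{a,b,c}(t)\mathbf x=\mathbf 1$.
   Context: For $a,b,c>0$ and $t\in\mathbb R$, $\mathbf M_{a,b,c}(t)=(\chi_{[0,c)}(t-\mu+\lambda))_{\mu\in a\mathbb Z,\lambda\in b\mathbb Z}$ is the infinite matrix with rows indexed by $a\mathbb Z$ and columns by $b\mathbb Z$, acting by $(\mathbf M_{a,b,c}(t)\mathbf x)(\mu)=\sum_{\lambda\in b\mathbb Z}\chi_{[0,c)}(t-\mu+\lambda)\mathbf x(\lambda)$. $\mathcal B_b$ is the set of vectors $(\mathbf x(\lambda))_{\lambda\in b\mathbb Z}$ with entries in $\{0,1\}$, and $\mathcal B_b^0=\{\mathbf x\in\mathcal B_b:\mathbf x(0)=1\}$. $\mathbf 1$ denotes the vector indexed by $a\mathbb Z$ with all entries $1$. $\mathcal S_{a,b,c}=\{t\in\mathbb R:\mathbf M_{a,b,c}(t)\mathbf x=\mathbf 1\text{ for some }\mathbf x\in\mathcal B_b^0\}$. *)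

theory Defs
  imports "HOL-Analysis.Analysis"
begin

text \<open>Rows of M_{a,b,c}(t) are indexed by mu = a*m (m :: int), columns by lambda = b*k (k :: int).
  Vectors indexed by b Z are represented as functions int => real (x k = x(b k)).\<close>

definition M_entry :: "real \<Rightarrow> real \<Rightarrow> real \<Rightarrow> real \<Rightarrow> int \<Rightarrow> int \<Rightarrow> real" where
  "M_entry a b c t m k = indicator {0..<c} (t - a * of_int m + b * of_int k)"

text \<open>(M x)(mu) = sum over lambda of chi(t - mu + lambda) x(lambda). Only finitely many entries
  of each row are nonzero (for b > 0), so the sum is taken over that finite support.\<close>
definition M_apply :: "real \<Rightarrow> real \<Rightarrow> real \<Rightarrow> real \<Rightarrow> (int \<Rightarrow> real) \<Rightarrow> int \<Rightarrow> real" where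
  "M_apply a b c t x m = (\<Sum>k\<in>{k::int. M_entry a b c t m k \<noteq> 0}. M_entry a b c t m k * x k)"

definition B_vecs :: "(int \<Rightarrow> real) set" where
  "B_vecs = {x. \<forall>k. x k \<in> {0, 1}}"

definition B0_vecs :: "(int \<Rightarrow> real) set" where
  "B0_vecs = {x \<in> B_vecs. x 0 = 1}"

definition S_set :: "real \<Rightarrow> real \<Rightarrow> real \<Rightarrow> real set" where
  "S_set a b c = {t. \<exists>x\<in>B0_vecs. \<forall>m. M_apply a b c t x m = 1}"

end

theory Submission
  imports Defs
begin

(* Existence of a solution is the hypothesis t \<in> S_{a,b,c}; the content is uniqueness,
   which holds as soon as 0 < a \<le> b and a \<le> c.  Row m of M_{a,b,c}(t) has its ones exactly on the "window"
   W m = {k. 0 \<le> t - a m + b k < c}, an interval of integers, so (M x)(m) is the sum of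
   x over W m.  Two solutions x, y with x 0 = y 0 = 1 are compared row by row:
   (i) if 0 \<in> W m, both vanish on W m - {0} (a row sum of 0-1 entries equal to 1);
   (ii) if x = y on W m - {k} and k \<in> W m, then x k = y k (equal row sums).
   Since a \<le> b, every index k is the largest index of some window and the smallest
   index of another; choosing the one on the far side of k from 0, every other index
   of that window is closer to 0 unless the window contains 0.  Induction on |k| then
   gives x = y. *)

definition window :: "real \<Rightarrow> real \<Rightarrow> real \<Rightarrow> real \<Rightarrow> int \<Rightarrow> int set" where
  "window a b c t m = {k. 0 \<le> t - a * of_int m + b * of_int k \<and> t - a * of_int m + b * of_int k < c}"

lemma finite_window:
  assumes "b > 0" shows "finite (window a b c t m)"
proof -
  have "window a b c t m \<subseteq> {\<lfloor>(a * of_int m - t) / b\<rfloor> .. \<lceil>(a * of_int m - t + c) / b\<rceil>}"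
  proof
    fix k assume "k \<in> window a b c t m"
    hence "a * of_int m - t \<le> b * of_int k" "b * of_int k < a * of_int m - t + c"
      by (auto simp: window_def)
    hence "(a * of_int m - t) / b \<le> of_int k" "of_int k \<le> (a * of_int m - t + c) / b"
      using assms by (simp_all add: divide_le_eq le_divide_eq mult.commute)
    thus "k \<in> {\<lfloor>(a * of_int m - t) / b\<rfloor> .. \<lceil>(a * of_int m - t + c) / b\<rceil>}"
      by (simp add: floor_le_iff le_ceiling_iff)
  qed
  thus ?thesis by (rule finite_subset) simp
qed

lemma window_convex:
  assumes "b \<ge> 0" "i \<in> window a b c t m" "l \<in> window a b c t m" "i \<le> j" "j \<le> l"
  shows "j \<in> window a b c t m"
proof -
  have "b * of_int i \<le> b * of_int j" "b * of_int j \<le> b * of_int l"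
    using assms by (simp_all add: mult_left_mono)
  thus ?thesis using assms(2,3) by (auto simp: window_def)
qed

lemma M_apply_window: "M_apply a b c t x m = (\<Sum>k\<in>window a b c t m. x k)"
proof -
  have "{k. M_entry a b c t m k \<noteq> 0} = window a b c t m"
    by (auto simp: M_entry_def window_def indicator_def)
  thus ?thesis unfolding M_apply_def
    by (auto intro: sum.cong simp: M_entry_def window_def indicator_def)
qed

lemma window_with_max:
  assumes "0 < a" "a \<le> b" "a \<le> c"
  obtains m where "k \<in> window a b c t m" "\<And>j. j \<in> window a b c t m \<Longrightarrow> j \<le> k"
proof
  define m where "m = \<lfloor>(b * of_int k + t - c) / a\<rfloor> + 1"
  have "of_int m - 1 \<le> (b * of_int k + t - c) / a" "(b * of_int k + t - c) / a < of_int m"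
    unfolding m_def by linarith+
  hence lo: "a * of_int m - a \<le> b * of_int k + t - c" and hi: "b * of_int k + t - c < a * of_int m"
    using assms(1) by (simp_all add: le_divide_eq divide_less_eq algebra_simps)
  show "k \<in> window a b c t m" unfolding window_def using lo hi assms by auto
  fix j assume "j \<in> window a b c t m"
  hence "b * of_int j < a * of_int m - t + c" by (auto simp: window_def)
  hence "b * of_int j < b * (of_int k + 1)" using lo assms by (simp add: algebra_simps)
  hence "of_int j < (of_int k + 1 :: real)" using assms by simp
  thus "j \<le> k" by linarith
qed

lemma window_with_min:
  assumes "0 < a" "a \<le> b" "a \<le> c"
  obtains m where "k \<in> window a b c t m" "\<And>j. j \<in> window a b c t m \<Longrightarrow> k \<le> j"
proof
  define m where "m = \<lfloor>(b * of_int k + t) / a\<rfloor>"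
  have "of_int m \<le> (b * of_int k + t) / a" "(b * of_int k + t) / a < of_int m + 1"
    unfolding m_def by linarith+
  hence lo: "a * of_int m \<le> b * of_int k + t" and hi: "b * of_int k + t < a * of_int m + a"
    using assms(1) by (simp_all add: le_divide_eq divide_less_eq algebra_simps)
  show "k \<in> window a b c t m" unfolding window_def using lo hi assms by auto
  fix j assume "j \<in> window a b c t m"
  hence "a * of_int m - t \<le> b * of_int j" by (auto simp: window_def)
  hence "b * (of_int k - 1) < b * of_int j" using hi assms by (simp add: algebra_simps)
  hence "of_int k - 1 < (of_int j :: real)" using assms by simp
  thus "k \<le> j" by linarith
qed

lemma outer_window:
  assumes "0 < a" "a \<le> b" "a \<le> c" "k \<noteq> 0"
  obtains m where "k \<in> window a b c t m"
    "\<And>j. j \<in> window a b c t m \<Longrightarrow> j \<noteq> k \<Longrightarrow> 0 \<notin> window a b c t m \<Longrightarrow> \<bar>j\<bar> < \<bar>k\<bar>"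
proof (cases "k > 0")
  case True
  obtain m where k: "k \<in> window a b c t m" and le: "\<And>j. j \<in> window a b c t m \<Longrightarrow> j \<le> k"
    using window_with_max[OF assms(1-3)] by blast
  show ?thesis
  proof (rule that[OF k])
    fix j assume j: "j \<in> window a b c t m" "j \<noteq> k" "0 \<notin> window a b c t m"
    have "\<not> j < 0" using window_convex[of b j a c t m k 0] j k True assms by fastforce
    thus "\<bar>j\<bar> < \<bar>k\<bar>" using le[OF j(1)] j(2) by auto
  qed
next
  case False
  obtain m where k: "k \<in> window a b c t m" and ge: "\<And>j. j \<in> window a b c t m \<Longrightarrow> k \<le> j"
    using window_with_min[OF assms(1-3)] by blast
  show ?thesis
  proof (rule that[OF k])
    fix j assume j: "j \<in> window a b c t m" "j \<noteq> k" "0 \<notin> window a b c t m"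
    have "\<not> j > 0" using window_convex[of b k a c t m j 0] j k False assms by fastforce
    thus "\<bar>j\<bar> < \<bar>k\<bar>" using ge[OF j(1)] j(2) False assms(4) by auto
  qed
qed

lemma row_determines_entry:
  assumes "b > 0" "M_apply a b c t x m = 1" "M_apply a b c t y m = 1"
    and "k \<in> window a b c t m" "\<And>j. j \<in> window a b c t m - {k} \<Longrightarrow> x j = y j"
  shows "x k = y k"
proof -
  let ?W = "window a b c t m"
  have fin: "finite ?W" using finite_window[OF assms(1)] .
  have "x k + (\<Sum>j\<in>?W - {k}. x j) = y k + (\<Sum>j\<in>?W - {k}. y j)"
    using assms(2,3) fin assms(4) by (simp add: M_apply_window sum.remove)
  moreover have "(\<Sum>j\<in>?W - {k}. x j) = (\<Sum>j\<in>?W - {k}. y j)"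
    using assms(5) by (rule sum.cong[OF refl])
  ultimately show ?thesis by simp
qed

lemma row_through_origin:
  assumes "b > 0" "x \<in> B0_vecs" "M_apply a b c t x m = 1"
    and "0 \<in> window a b c t m" "k \<in> window a b c t m" "k \<noteq> 0"
  shows "x k = 0"
proof -
  let ?W = "window a b c t m"
  have fin: "finite ?W" using finite_window[OF assms(1)] .
  have x01: "\<And>j. x j = 0 \<or> x j = 1" and x0: "x 0 = 1"
    using assms(2) by (auto simp: B0_vecs_def B_vecs_def)
  have nonneg: "\<And>j. x j \<ge> 0" using x01 by (metis order.refl zero_le_one)
  have "1 = x 0 + (\<Sum>j\<in>?W - {0}. x j)"
    using assms(3,4) fin by (simp add: M_apply_window sum.remove)
  hence "(\<Sum>j\<in>?W - {0}. x j) = 0" using x0 by simp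
  hence "\<forall>j\<in>?W - {0}. x j = 0" using fin nonneg by (simp add: sum_nonneg_eq_0_iff)
  thus ?thesis using assms(5,6) by blast
qed

lemma solutions_agree_at:
  assumes "0 < a" "a \<le> b" "a \<le> c"
    and x: "x \<in> B0_vecs" "\<forall>m. M_apply a b c t x m = 1"
    and y: "y \<in> B0_vecs" "\<forall>m. M_apply a b c t y m = 1"
    and closer: "\<And>j. \<bar>j\<bar> < \<bar>k\<bar> \<Longrightarrow> x j = y j"
  shows "x k = y k"
proof (cases "k = 0")
  case True
  thus ?thesis using x y by (simp add: B0_vecs_def)
next
  case False
  have b: "b > 0" using assms(1,2) by simp
  obtain m where k: "k \<in> window a b c t m" and
    inner: "\<And>j. j \<in> window a b c t m \<Longrightarrow> j \<noteq> k \<Longrightarrow> 0 \<notin> window a b c t m \<Longrightarrow> \<bar>j\<bar> < \<bar>k\<bar>"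
    using outer_window[OF assms(1-3) False] by blast
  show ?thesis
  proof (cases "0 \<in> window a b c t m")
    case True
    show ?thesis
      using row_through_origin[OF b x(1) x(2)[rule_format] True k False]
            row_through_origin[OF b y(1) y(2)[rule_format] True k False] by simp
  next
    case False
    show ?thesis
      using row_determines_entry[OF b x(2)[rule_format] y(2)[rule_format] k]
            inner closer False by blast
  qed
qed

lemma normalized_solution_unique:
  assumes "0 < a" "a \<le> b" "a \<le> c"
    and x: "x \<in> B0_vecs" "\<forall>m. M_apply a b c t x m = 1"
    and y: "y \<in> B0_vecs" "\<forall>m. M_apply a b c t y m = 1"
  shows "x = y"
proof
  fix k :: int
  show "x k = y k"
  proof (induction "nat \<bar>k\<bar>" arbitrary: k rule: less_induct)
    case less
    show ?case
      by (rule solutions_agree_at[OF assms]) (use less in auto)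
  qed
qed

theorem proposition3p9:
  fixes a b c :: real
  assumes "0 < a" "a < b" "b < c"
    and "b - a < c - of_int \<lfloor>c / b\<rfloor> * b" "c - of_int \<lfloor>c / b\<rfloor> * b < a"
    and "t \<in> S_set a b c"
  shows "\<exists>!x. x \<in> B0_vecs \<and> (\<forall>m. M_apply a b c t x m = 1)"
proof -
  obtain x where "x \<in> B0_vecs" "\<forall>m. M_apply a b c t x m = 1"
    using assms(6) by (auto simp: S_set_def)
  moreover have "a \<le> b" "a \<le> c" using assms(2,3) by simp_all
  ultimately show ?thesis
    using normalized_solution_unique[OF assms(1)] by blast
qed

end
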